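(* Let $d\ge 1$ and $k\ge 0$ be integers and let $f\in L^1(\mathbb{R}^d;1+|x|^{k+1})$. Then there exists a family of functions $\{F_\alpha\}_{|\alpha|=k+1}$ with $F_\alpha\in L^1(\mathbb{R}^d)$ such that, in the sense of tempered distributions, $$ f=\sum_{|\alpha|\le k}\frac{(-1)^{|\alpha|}}{\alpha!}\Big(\int_{\mathbb{R}^d} x^\alpha f(x)\,dx\Big)D^\alpha\delta+\sum_{|\alpha|=k+1}D^\alpha F_\alpha, $$ and moreover for every multi-index $\alpha$ with $|\alpha|=k+1$, $$\|F_\alpha\|_{L^1}\le \frac{\|x^\alpha f(x)\|_{L^1}}{\alpha!}.$$ (One may take $F_\alpha(x)=(-1)^{|\alpha|}\int_0^1 (k+1)\frac{(1-s)^k}{s^{d+|\alpha|}}\frac{x^\alpha}{\alpha!}f(x/s)\,ds$.)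
   Context: $L^1(\mathbb{R}^d;1+|x|^{m})$ denotes the set of measurable functions $f$ with $\int_{\mathbb{R}^d}|f(x)|(1+|x|^m)\,dx<\infty$. For a multi-index $\alpha=(\alpha_1,\dots,\alpha_d)\in\mathbb{Z}_{\ge0}^d$: $|\alpha|=\alpha_1+\cdots+\alpha_d$, $\alpha!=\alpha_1!\cdots\alpha_d!$, $x^\alpha=x_1^{\alpha_1}\cdots x_d^{\alpha_d}$, $D^\alpha=\partial_{x_1}^{\alpha_1}\cdots\partial_{x_d}^{\alpha_d}$. $\delta$ is the Dirac mass at the origin. *)

theory Defs
  imports "HOL-Analysis.Analysis"
begin

text \<open>Euclidean space R^d is modelled as real^'n with 'n a finite (linearly ordered) index type,
  d = CARD('n). Multi-indices are functions 'n => nat.\<close>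

definition mi_abs :: "('n::finite \<Rightarrow> nat) \<Rightarrow> nat" where
  "mi_abs \<alpha> = (\<Sum>i\<in>UNIV. \<alpha> i)"

definition mi_fact :: "('n::finite \<Rightarrow> nat) \<Rightarrow> real" where
  "mi_fact \<alpha> = (\<Prod>i\<in>UNIV. fact (\<alpha> i))"

definition mi_pow :: "real^'n::finite \<Rightarrow> ('n \<Rightarrow> nat) \<Rightarrow> real" where
  "mi_pow x \<alpha> = (\<Prod>i\<in>UNIV. (x $ i) ^ (\<alpha> i))"

definition partial_dir :: "'n::finite \<Rightarrow> (real^'n \<Rightarrow> real) \<Rightarrow> (real^'n \<Rightarrow> real)" where
  "partial_dir i g = (\<lambda>x. deriv (\<lambda>t. g (x + t *\<^sub>R axis i 1)) 0)"

definition Dmi :: "(('n::{finite,linorder}) \<Rightarrow> nat) \<Rightarrow> (real^('n::{finite,linorder}) \<Rightarrow> real) \<Rightarrow> (real^('n::{finite,linorder}) \<Rightarrow> real)" where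
  "Dmi \<alpha> g = foldr (\<lambda>i h. (partial_dir i ^^ \<alpha> i) h) (sorted_list_of_set UNIV) g"

definition schwartz :: "(real^('n::{finite,linorder}) \<Rightarrow> real) \<Rightarrow> bool" where
  "schwartz \<phi> \<longleftrightarrow>
     (\<forall>\<alpha> i x. (\<lambda>t. Dmi \<alpha> \<phi> (x + t *\<^sub>R axis i 1)) differentiable (at 0)) \<and>
     (\<forall>\<alpha>. continuous_on UNIV (Dmi \<alpha> \<phi>)) \<and>
     (\<forall>\<alpha> (N::nat). bounded (range (\<lambda>x. (1 + norm x) ^ N * Dmi \<alpha> \<phi> x)))"

type_synonym 'n distr = "(real^'n \<Rightarrow> real) \<Rightarrow> real"

definition regular_distr :: "(real^'n::finite \<Rightarrow> real) \<Rightarrow> 'n distr" where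
  "regular_distr f = (\<lambda>\<phi>. integral\<^sup>L lborel (\<lambda>x. f x * \<phi> x))"

definition dirac :: "'n::finite distr" where
  "dirac = (\<lambda>\<phi>. \<phi> 0)"

definition distr_D :: "(('n::{finite,linorder}) \<Rightarrow> nat) \<Rightarrow> ('n::{finite,linorder}) distr \<Rightarrow> ('n::{finite,linorder}) distr" where
  "distr_D \<alpha> T = (\<lambda>\<phi>. (-1) ^ mi_abs \<alpha> * T (Dmi \<alpha> \<phi>))"

end

theory Submission
  imports Defs
begin

(* For a Schwartz function phi and a point x, Taylor's formula along the
   segment s |-> s x with integral remainder reads
     phi x = sum_{|a|<=k} D^a phi(0) x^a / a!
           + sum_{|a|=k+1} (k+1)/a! x^a int_0^1 (1-s)^k D^a phi(s x) ds.
   Multiplying by f and integrating, the first sum gives the moment terms, which are the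
   Dirac-derivative terms of the theorem.  In each remainder term we substitute y = s x
   for fixed s (a dilation of Lebesgue measure) and exchange the s- and y-integrals
   (Fubini); it becomes (k+1)/a! int H_a(y) D^a phi(y) dy with the profile
   H_a(y) = int_0^1 (1-s)^k s^(-n-k-1) y^a f(y/s) ds, i.e. the pairing of D^a F_a with phi
   for F_a = (-1)^|a| (k+1)/a! H_a.  The same Fubini computation with absolute values,
   together with int_0^1 (1-s)^k ds = 1/(k+1), gives the L^1 bound. *)

section \<open>Multi-indices\<close>

definition bump :: "('n \<Rightarrow> nat) \<Rightarrow> 'n \<Rightarrow> ('n \<Rightarrow> nat)" where
  "bump \<alpha> j = \<alpha>(j := Suc (\<alpha> j))"

lemma mi_abs_bump: "mi_abs (bump \<alpha> j) = Suc (mi_abs (\<alpha>::'n::finite\<Rightarrow>nat))"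
proof -
  have "(\<Sum>i\<in>UNIV. bump \<alpha> j i) = (\<Sum>i\<in>UNIV. \<alpha> i + (if i = j then 1 else 0))"
    by (rule sum.cong) (auto simp: bump_def)
  also have "\<dots> = (\<Sum>i\<in>UNIV. \<alpha> i) + 1" by (simp add: sum.distrib)
  finally show ?thesis by (simp add: mi_abs_def)
qed

lemma mi_fact_bump: "mi_fact (bump \<alpha> j) = mi_fact (\<alpha>::'n::finite\<Rightarrow>nat) * Suc (\<alpha> j)"
proof -
  have "(\<Prod>i\<in>UNIV. (fact (bump \<alpha> j i)::real))
      = (\<Prod>i\<in>UNIV. fact (\<alpha> i) * (if i = j then real (Suc (\<alpha> j)) else 1))"
    by (rule prod.cong) (auto simp: bump_def)
  also have "\<dots> = (\<Prod>i\<in>UNIV. fact (\<alpha> i)) * real (Suc (\<alpha> j))"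
    by (simp add: prod.distrib)
  finally show ?thesis by (simp add: mi_fact_def)
qed

lemma mi_pow_bump: "mi_pow x (bump \<alpha> j) = mi_pow x \<alpha> * x $ j"
proof -
  have "(\<Prod>i\<in>UNIV. (x $ i) ^ (bump \<alpha> j i)) = (\<Prod>i\<in>UNIV. (x $ i) ^ (\<alpha> i) * (if i = j then x $ j else 1))"
    by (rule prod.cong) (auto simp: bump_def)
  also have "\<dots> = (\<Prod>i\<in>UNIV. (x $ i) ^ (\<alpha> i)) * x $ j"
    by (simp add: prod.distrib)
  finally show ?thesis by (simp add: mi_pow_def)
qed

lemma mi_fact_pos: "mi_fact \<alpha> > 0"
  by (simp add: mi_fact_def prod_pos)

lemma mi_pow_scaleR: "mi_pow (c *\<^sub>R x) \<alpha> = c ^ mi_abs \<alpha> * mi_pow x \<alpha>"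
  by (simp add: mi_pow_def mi_abs_def power_mult_distrib prod.distrib power_sum)

lemma mi_abs_eq_0_set: "{\<alpha>::'n::finite\<Rightarrow>nat. mi_abs \<alpha> = 0} = {\<lambda>_. 0}"
  by (auto simp: mi_abs_def fun_eq_iff)

lemma finite_mi_abs_le: "finite {\<alpha>::'n::finite\<Rightarrow>nat. mi_abs \<alpha> \<le> m}"
proof (rule finite_subset)
  show "{\<alpha>::'n\<Rightarrow>nat. mi_abs \<alpha> \<le> m} \<subseteq> PiE UNIV (\<lambda>_. {..m})"
  proof
    fix \<alpha> :: "'n \<Rightarrow> nat" assume "\<alpha> \<in> {\<alpha>. mi_abs \<alpha> \<le> m}"
    then have "\<alpha> i \<le> m" for i
      using member_le_sum[of i UNIV \<alpha>] by (auto simp: mi_abs_def)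
    then show "\<alpha> \<in> PiE UNIV (\<lambda>_. {..m})" by (auto simp: PiE_def extensional_def)
  qed
qed (rule finite_PiE, auto)

lemma finite_mi_abs_eq: "finite {\<alpha>::'n::finite\<Rightarrow>nat. mi_abs \<alpha> = m}"
  by (rule finite_subset[OF _ finite_mi_abs_le[of m]]) auto

lemma sum_mi_abs_le_by_degree:
  fixes g :: "('n::finite \<Rightarrow> nat) \<Rightarrow> real"
  shows "(\<Sum>\<beta>\<in>{\<beta>. mi_abs \<beta> \<le> k}. g \<beta>) = (\<Sum>m\<le>k. \<Sum>\<beta>\<in>{\<beta>. mi_abs \<beta> = m}. g \<beta>)"
proof -
  have "(\<Sum>m\<le>k. \<Sum>\<beta>\<in>{\<beta>\<in>{\<beta>. mi_abs \<beta> \<le> k}. mi_abs \<beta> = m}. g \<beta>) = (\<Sum>\<beta>\<in>{\<beta>. mi_abs \<beta> \<le> k}. g \<beta>)"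
    by (rule sum.group) (auto simp: finite_mi_abs_le)
  moreover have "(\<Sum>m\<le>k. \<Sum>\<beta>\<in>{\<beta>\<in>{\<beta>. mi_abs \<beta> \<le> k}. mi_abs \<beta> = m}. g \<beta>)
      = (\<Sum>m\<le>k. \<Sum>\<beta>\<in>{\<beta>. mi_abs \<beta> = m}. g \<beta>)"
    by (intro sum.cong refl) auto
  ultimately show ?thesis by simp
qed

lemma bump_bij:
  "bij_betw (\<lambda>\<alpha>. bump \<alpha> j) {\<alpha>::'n::finite\<Rightarrow>nat. mi_abs \<alpha> = m} {\<beta>. mi_abs \<beta> = Suc m \<and> \<beta> j \<noteq> 0}"
proof (rule bij_betw_imageI)
  show "inj_on (\<lambda>\<alpha>. bump \<alpha> j) {\<alpha>. mi_abs \<alpha> = m}"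
    by (rule inj_onI) (auto simp: bump_def fun_eq_iff split: if_splits)
  show "(\<lambda>\<alpha>. bump \<alpha> j) ` {\<alpha>. mi_abs \<alpha> = m} = {\<beta>. mi_abs \<beta> = Suc m \<and> \<beta> j \<noteq> 0}"
  proof (rule subset_antisym)
    show "{\<beta>. mi_abs \<beta> = Suc m \<and> \<beta> j \<noteq> 0} \<subseteq> (\<lambda>\<alpha>. bump \<alpha> j) ` {\<alpha>. mi_abs \<alpha> = m}"
    proof
      fix \<beta> :: "'n \<Rightarrow> nat" assume \<beta>: "\<beta> \<in> {\<beta>. mi_abs \<beta> = Suc m \<and> \<beta> j \<noteq> 0}"
      then have "bump (\<beta>(j := \<beta> j - 1)) j = \<beta>" by (auto simp: bump_def fun_eq_iff)
      moreover from this have "mi_abs (\<beta>(j := \<beta> j - 1)) = m"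
        using \<beta> mi_abs_bump[of "\<beta>(j := \<beta> j - 1)" j] by simp
      ultimately show "\<beta> \<in> (\<lambda>\<alpha>. bump \<alpha> j) ` {\<alpha>. mi_abs \<alpha> = m}" by force
    qed
  qed (auto simp: mi_abs_bump[unfolded bump_def] bump_def)
qed

text \<open>This is
  the inductive step behind the multinomial expansion of \<open>(x\<cdot>\<nabla>)^m\<close>.\<close>
lemma multinomial_recurrence:
  fixes c :: "('n::finite \<Rightarrow> nat) \<Rightarrow> real"
  shows "(\<Sum>\<alpha>\<in>{\<alpha>. mi_abs \<alpha> = m}. (fact m / mi_fact \<alpha>) * mi_pow x \<alpha> * (\<Sum>j\<in>UNIV. x $ j * c (bump \<alpha> j)))
       = (\<Sum>\<beta>\<in>{\<beta>. mi_abs \<beta> = Suc m}. (fact (Suc m) / mi_fact \<beta>) * mi_pow x \<beta> * c \<beta>)"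
proof -
  let ?A = "{\<alpha>::'n\<Rightarrow>nat. mi_abs \<alpha> = m}" and ?B = "{\<beta>::'n\<Rightarrow>nat. mi_abs \<beta> = Suc m}"
  let ?g = "\<lambda>j \<beta>. (fact m * \<beta> j / mi_fact \<beta>) * mi_pow x \<beta> * c \<beta>"
  have bumped_term: "(fact m / mi_fact \<alpha>) * mi_pow x (bump \<alpha> j) * c (bump \<alpha> j) = ?g j (bump \<alpha> j)"
    for \<alpha> j
  proof -
    have "bump \<alpha> j j = Suc (\<alpha> j)" by (simp add: bump_def)
    moreover have "mi_fact \<alpha> > 0" "mi_fact \<alpha> + mi_fact \<alpha> * real (\<alpha> j) > 0"
      using mi_fact_pos[of \<alpha>] by (auto simp: add_pos_nonneg)
    ultimately show ?thesis by (simp add: mi_fact_bump field_simps)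
  qed
  have per_j: "(\<Sum>\<alpha>\<in>?A. ?g j (bump \<alpha> j)) = (\<Sum>\<beta>\<in>?B. ?g j \<beta>)" for j
  proof -
    have "(\<Sum>\<alpha>\<in>?A. ?g j (bump \<alpha> j)) = (\<Sum>\<beta>\<in>{\<beta>. mi_abs \<beta> = Suc m \<and> \<beta> j \<noteq> 0}. ?g j \<beta>)"
      by (rule sum.reindex_bij_betw[OF bump_bij])
    also have "\<dots> = (\<Sum>\<beta>\<in>?B. ?g j \<beta>)"
      by (rule sum.mono_neutral_left) (auto simp: finite_mi_abs_eq)
    finally show ?thesis .
  qed
  have "(\<Sum>\<alpha>\<in>?A. (fact m / mi_fact \<alpha>) * mi_pow x \<alpha> * (\<Sum>j\<in>UNIV. x $ j * c (bump \<alpha> j)))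
      = (\<Sum>j\<in>UNIV. \<Sum>\<alpha>\<in>?A. (fact m / mi_fact \<alpha>) * mi_pow x (bump \<alpha> j) * c (bump \<alpha> j))"
    by (subst sum.swap) (simp add: sum_distrib_left mi_pow_bump mult_ac)
  also have "\<dots> = (\<Sum>j\<in>UNIV. \<Sum>\<beta>\<in>?B. ?g j \<beta>)"
    by (simp only: bumped_term per_j)
  also have "\<dots> = (\<Sum>\<beta>\<in>?B. (fact m * (\<Sum>j\<in>UNIV. real (\<beta> j)) / mi_fact \<beta>) * mi_pow x \<beta> * c \<beta>)"
    by (subst sum.swap) (simp add: sum_distrib_left sum_distrib_right sum_divide_distrib)
  also have "\<dots> = (\<Sum>\<beta>\<in>?B. (fact (Suc m) / mi_fact \<beta>) * mi_pow x \<beta> * c \<beta>)"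
    by (intro sum.cong refl) (simp add: mi_abs_def mult_ac flip: of_nat_sum)
  finally show ?thesis .
qed

section \<open>Iterated partial derivatives\<close>

lemma foldr_iterate_cong:
  "(\<And>l. l \<in> set xs \<Longrightarrow> \<alpha> l = \<beta> l) \<Longrightarrow>
   foldr (\<lambda>i h. (P i ^^ \<alpha> i) h) xs g = foldr (\<lambda>i h. (P i ^^ \<beta> i) h) xs g"
  by (induction xs) auto

lemma foldr_iterate_bump:
  fixes xs :: "'a::linorder list"
  assumes "sorted xs" "distinct xs" "j \<in> set xs" "\<forall>l\<in>set xs. l < j \<longrightarrow> \<alpha> l = 0"
  shows "foldr (\<lambda>i h. (P i ^^ bump \<alpha> j i) h) xs g = P j (foldr (\<lambda>i h. (P i ^^ \<alpha> i) h) xs g)"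
  using assms
proof (induction xs)
  case (Cons a xs)
  show ?case
  proof (cases "a = j")
    case True
    then have "foldr (\<lambda>i h. (P i ^^ bump \<alpha> j i) h) xs g = foldr (\<lambda>i h. (P i ^^ \<alpha> i) h) xs g"
      using Cons.prems by (intro foldr_iterate_cong) (auto simp: bump_def)
    then show ?thesis using True by (simp add: bump_def)
  next
    case False
    with Cons.prems have "\<alpha> a = 0" "bump \<alpha> j a = 0" by (auto simp: bump_def)
    moreover have "foldr (\<lambda>i h. (P i ^^ bump \<alpha> j i) h) xs g = P j (foldr (\<lambda>i h. (P i ^^ \<alpha> i) h) xs g)"
      using Cons.prems False by (intro Cons.IH) auto
    ultimately show ?thesis by simp
  qed
qed simp

text \<open>Since \<open>D^\<alpha>\<close> differentiates in increasing coordinate order, bumping \<open>\<alpha>\<close> at a coordinate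
  below its support adds one outermost partial derivative.\<close>
lemma Dmi_bump_below_support:
  assumes "\<forall>l. \<alpha> l \<noteq> 0 \<longrightarrow> j \<le> l"
  shows "Dmi (bump \<alpha> j) g = partial_dir j (Dmi \<alpha> g)"
  unfolding Dmi_def
  by (rule foldr_iterate_bump) (use assms leD in auto)

lemma Dmi_zero: "Dmi (\<lambda>_. 0) g = g"
proof -
  have "foldr (\<lambda>i h. (P i ^^ (0::nat)) h) xs g = g" for P and xs :: "'a list"
    by (induction xs) auto
  then show ?thesis unfolding Dmi_def .
qed


section \<open>Partial derivatives of functions on \<open>\<real>^n\<close>\<close>

lemma mvt_from_0:
  fixes f :: "real \<Rightarrow> real"
  assumes "\<And>t. (f has_real_derivative f' t) (at t)"
  shows "\<exists>z. \<bar>z\<bar> \<le> \<bar>b\<bar> \<and> f b - f 0 = b * f' z"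
proof (cases b "0::real" rule: linorder_cases)
  case less
  from MVT2[OF this assms] obtain z where "b < z" "z < 0" "f 0 - f b = (0 - b) * f' z" by blast
  then show ?thesis by (intro exI[of _ z]) (auto simp: algebra_simps)
next
  case greater
  from MVT2[OF this assms] obtain z where "0 < z" "z < b" "f b - f 0 = (b - 0) * f' z" by blast
  then show ?thesis by (intro exI[of _ z]) auto
qed (intro exI[of _ 0], simp)

lemma partial_dir_has_derivative:
  assumes "(\<lambda>t. g (x + t *\<^sub>R axis i 1)) differentiable (at 0)"
  shows "((\<lambda>t. g (x + t *\<^sub>R axis i 1)) has_real_derivative partial_dir i g x) (at 0)"
  using assms by (simp add: partial_dir_def DERIV_deriv_iff_real_differentiable)

lemma has_derivative_along_line:
  fixes v :: "'a::real_normed_vector"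
  assumes "\<And>z. ((\<lambda>t. g (z + t *\<^sub>R v)) has_real_derivative p z) (at 0)"
  shows "((\<lambda>t. g (x + t *\<^sub>R v)) has_real_derivative p (x + s *\<^sub>R v)) (at s)"
proof -
  have "((\<lambda>t. g ((x + s *\<^sub>R v) + t *\<^sub>R v)) has_real_derivative p (x + s *\<^sub>R v)) (at 0)"
    by (rule assms)
  moreover have "(\<lambda>t. g ((x + s *\<^sub>R v) + t *\<^sub>R v)) = (\<lambda>t. (\<lambda>t. g (x + t *\<^sub>R v)) (t + s))"
    by (simp add: scaleR_add_left add_ac)
  ultimately show ?thesis
    using DERIV_shift[of "\<lambda>t. g (x + t *\<^sub>R v)" "p (x + s *\<^sub>R v)" 0 s] by simp
qed

lemma partial_dir_along_line:
  assumes "\<forall>z. (\<lambda>t. g (z + t *\<^sub>R axis i 1)) differentiable (at 0)"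
  shows "((\<lambda>t. g (x + t *\<^sub>R axis i 1)) has_real_derivative partial_dir i g (x + s *\<^sub>R axis i 1)) (at s)"
  by (rule has_derivative_along_line) (use assms partial_dir_has_derivative in blast)

lemma second_difference_mvt:
  fixes g :: "real^'n::finite \<Rightarrow> real"
  assumes dj: "\<forall>z. (\<lambda>t. g (z + t *\<^sub>R axis j 1)) differentiable (at 0)"
    and dij: "\<forall>z. (\<lambda>t. partial_dir j g (z + t *\<^sub>R axis i 1)) differentiable (at 0)"
  shows "\<exists>\<xi> \<eta>. \<bar>\<xi>\<bar> \<le> \<bar>u\<bar> \<and> \<bar>\<eta>\<bar> \<le> \<bar>v\<bar> \<and>
           g (x + u *\<^sub>R axis i 1 + v *\<^sub>R axis j 1) - g (x + u *\<^sub>R axis i 1) - g (x + v *\<^sub>R axis j 1) + g x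
           = u * v * partial_dir i (partial_dir j g) (x + \<xi> *\<^sub>R axis i 1 + \<eta> *\<^sub>R axis j 1)"
proof -
  define ei :: "real^'n" where "ei = axis i 1"
  define ej :: "real^'n" where "ej = axis j 1"
  define A where "A w = g (x + u *\<^sub>R ei + w *\<^sub>R ej) - g (x + w *\<^sub>R ej)" for w
  define A' where "A' w = partial_dir j g (x + u *\<^sub>R ei + w *\<^sub>R ej) - partial_dir j g (x + w *\<^sub>R ej)" for w
  have "(A has_real_derivative A' w) (at w)" for w
    unfolding A_def A'_def ej_def
    by (intro derivative_intros partial_dir_along_line[OF dj])
  from mvt_from_0[of A A', OF this] obtain \<eta> where \<eta>: "\<bar>\<eta>\<bar> \<le> \<bar>v\<bar>" "A v - A 0 = v * A' \<eta>"
    by blast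
  define B where "B w = partial_dir j g ((x + \<eta> *\<^sub>R ej) + w *\<^sub>R ei)" for w
  have "(B has_real_derivative partial_dir i (partial_dir j g) ((x + \<eta> *\<^sub>R ej) + w *\<^sub>R ei)) (at w)" for w
    unfolding B_def ei_def by (rule partial_dir_along_line[OF dij])
  from mvt_from_0[of B, OF this] obtain \<xi> where
    \<xi>: "\<bar>\<xi>\<bar> \<le> \<bar>u\<bar>" "B u - B 0 = u * partial_dir i (partial_dir j g) ((x + \<eta> *\<^sub>R ej) + \<xi> *\<^sub>R ei)"
    by blast
  have "A' \<eta> = B u - B 0" unfolding A'_def B_def by (simp add: algebra_simps)
  with \<eta> \<xi> show ?thesis
    unfolding A_def ei_def ej_def by (intro exI[of _ \<xi>] exI[of _ \<eta>]) (simp add: algebra_simps)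
qed

lemma second_difference_quotient_limit:
  fixes g :: "real^'n::finite \<Rightarrow> real"
  assumes di: "\<forall>z. (\<lambda>t. g (z + t *\<^sub>R axis i 1)) differentiable (at 0)" and v: "v \<noteq> 0"
  shows "((\<lambda>u. (g (x + u *\<^sub>R axis i 1 + v *\<^sub>R axis j 1) - g (x + u *\<^sub>R axis i 1)
                 - g (x + v *\<^sub>R axis j 1) + g x) / (u * v))
          \<longlongrightarrow> (partial_dir i g (x + v *\<^sub>R axis j 1) - partial_dir i g x) / v) (at 0)"
proof -
  have quot: "((\<lambda>u. (g (z + u *\<^sub>R axis i 1) - g z) / u) \<longlongrightarrow> partial_dir i g z) (at 0)" for z
    using partial_dir_has_derivative[of g z i] di unfolding has_field_derivative_iff by simp
  have "((\<lambda>u. ((g ((x + v *\<^sub>R axis j 1) + u *\<^sub>R axis i 1) - g (x + v *\<^sub>R axis j 1)) / u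
              - (g (x + u *\<^sub>R axis i 1) - g x) / u) / v)
        \<longlongrightarrow> (partial_dir i g (x + v *\<^sub>R axis j 1) - partial_dir i g x) / v) (at 0)"
    by (intro tendsto_intros quot) (use v in auto)
  moreover have "eventually (\<lambda>u. ((g ((x + v *\<^sub>R axis j 1) + u *\<^sub>R axis i 1) - g (x + v *\<^sub>R axis j 1)) / u
              - (g (x + u *\<^sub>R axis i 1) - g x) / u) / v
         = (g (x + u *\<^sub>R axis i 1 + v *\<^sub>R axis j 1) - g (x + u *\<^sub>R axis i 1)
            - g (x + v *\<^sub>R axis j 1) + g x) / (u * v)) (at 0)"
    unfolding eventually_at using v by (intro exI[of _ 1]) (auto simp: field_simps add_ac)
  ultimately show ?thesis by (rule Lim_transform_eventually)
qed

text \<open>Schwarz's theorem: if \<open>\<partial>\<^sub>i\<partial>\<^sub>j g\<close> exists and is continuous, then \<open>\<partial>\<^sub>i g\<close> is differentiable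
  in direction \<open>e\<^sub>j\<close> with derivative \<open>\<partial>\<^sub>i\<partial>\<^sub>j g\<close>, i.e. \<open>\<partial>\<^sub>j\<partial>\<^sub>i g = \<partial>\<^sub>i\<partial>\<^sub>j g\<close>.\<close>
lemma mixed_partials_commute:
  fixes g :: "real^'n::finite \<Rightarrow> real"
  assumes di: "\<forall>z. (\<lambda>t. g (z + t *\<^sub>R axis i 1)) differentiable (at 0)"
    and dj: "\<forall>z. (\<lambda>t. g (z + t *\<^sub>R axis j 1)) differentiable (at 0)"
    and dij: "\<forall>z. (\<lambda>t. partial_dir j g (z + t *\<^sub>R axis i 1)) differentiable (at 0)"
    and cont: "continuous_on UNIV (partial_dir i (partial_dir j g))"
  shows "((\<lambda>v. partial_dir i g (x + v *\<^sub>R axis j 1)) has_real_derivative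
           partial_dir i (partial_dir j g) x) (at 0)"
  unfolding has_field_derivative_iff
proof (rule LIM_I)
  define pp where "pp = partial_dir i (partial_dir j g)"
  fix r :: real assume r: "r > 0"
  have "isCont pp x" using cont unfolding pp_def by (simp add: continuous_on_eq_continuous_at)
  then obtain \<delta> where \<delta>: "\<delta> > 0" "\<And>z. dist z x < \<delta> \<Longrightarrow> dist (pp z) (pp x) < r / 2"
    using r unfolding continuous_at_eps_delta by (metis half_gt_zero)
  show "\<exists>s>0. \<forall>v. v \<noteq> 0 \<and> norm (v - 0) < s \<longrightarrow>
      norm ((partial_dir i g (x + v *\<^sub>R axis j 1) - partial_dir i g (x + 0 *\<^sub>R axis j 1)) / (v - 0) - pp x) < r"
  proof (intro exI[of _ "\<delta>/2"] conjI allI impI)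
    fix v :: real assume v: "v \<noteq> 0 \<and> norm (v - 0) < \<delta> / 2"
    define \<Delta> where "\<Delta> u = (g (x + u *\<^sub>R axis i 1 + v *\<^sub>R axis j 1) - g (x + u *\<^sub>R axis i 1)
                            - g (x + v *\<^sub>R axis j 1) + g x) / (u * v)" for u
    have "eventually (\<lambda>u. norm (\<Delta> u - pp x) \<le> r / 2) (at 0)"
      unfolding eventually_at
    proof (intro exI[of _ "\<delta>/2"] conjI ballI impI)
      fix u :: real assume u: "u \<noteq> 0 \<and> dist u 0 < \<delta> / 2"
      obtain \<xi> \<eta> where mvt: "\<bar>\<xi>\<bar> \<le> \<bar>u\<bar>" "\<bar>\<eta>\<bar> \<le> \<bar>v\<bar>"
          "\<Delta> u = pp (x + \<xi> *\<^sub>R axis i 1 + \<eta> *\<^sub>R axis j 1)"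
        using second_difference_mvt[OF dj dij, of u v x] u v by (auto simp: \<Delta>_def pp_def)
      have "norm (\<xi> *\<^sub>R axis i 1 + \<eta> *\<^sub>R axis j (1::real) :: real^'n) \<le> \<bar>\<xi>\<bar> + \<bar>\<eta>\<bar>"
        by (rule order_trans[OF norm_triangle_ineq]) simp
      then have "dist (x + \<xi> *\<^sub>R axis i 1 + \<eta> *\<^sub>R axis j 1) x < \<delta>"
        using mvt u v by (simp add: dist_norm add.assoc)
      then show "norm (\<Delta> u - pp x) \<le> r / 2"
        using \<delta>(2) mvt(3) by (simp add: dist_norm less_imp_le)
    qed (use \<delta> in simp)
    then have "norm ((partial_dir i g (x + v *\<^sub>R axis j 1) - partial_dir i g x) / v - pp x) \<le> r / 2"
      using v unfolding \<Delta>_def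
      by (intro Lim_norm_ubound[OF _ tendsto_diff[OF second_difference_quotient_limit[OF di] tendsto_const]])
         auto
    then show "norm ((partial_dir i g (x + v *\<^sub>R axis j 1) - partial_dir i g (x + 0 *\<^sub>R axis j 1)) / (v - 0) - pp x) < r"
      using r by simp
  qed (use \<delta> in simp)
qed

text \<open>\<open>proj S h\<close> keeps the coordinates of \<open>h\<close> indexed by \<open>S\<close>; it lets us move from \<open>y\<close> to
  \<open>y + h\<close> one coordinate at a time.\<close>
definition proj :: "'n::finite set \<Rightarrow> real^'n \<Rightarrow> real^'n" where
  "proj S h = (\<chi> i. if i \<in> S then h $ i else 0)"

lemma norm_proj_plus_axis_le:
  assumes "\<bar>z\<bar> \<le> \<bar>h $ j\<bar>" "j \<notin> S"
  shows "norm (proj S h + z *\<^sub>R axis j 1) \<le> norm h"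
  by (rule norm_le_componentwise_cart) (use assms in \<open>auto simp: proj_def axis_def\<close>)

lemma partial_increment_estimate:
  fixes g :: "real^'n::finite \<Rightarrow> real"
  assumes d: "\<And>i z. ((\<lambda>t. g (z + t *\<^sub>R axis i 1)) has_real_derivative p i z) (at 0)"
    and c: "\<And>i. continuous_on UNIV (p i)"
    and "finite S" and e: "e > 0"
  shows "\<exists>d>0. \<forall>h. norm h < d \<longrightarrow> \<bar>g (y + proj S h) - g y - (\<Sum>i\<in>S. h $ i * p i y)\<bar> \<le> e * norm h"
  using \<open>finite S\<close> e
proof (induction S arbitrary: e rule: finite_induct)
  case empty
  show ?case
    using empty.prems by (intro exI[of _ 1]) (auto simp: proj_def zero_vec_def[symmetric])
next
  case (insert j S)
  obtain d1 where d1: "d1 > 0" "\<And>h. norm h < d1 \<Longrightarrow>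
      \<bar>g (y + proj S h) - g y - (\<Sum>i\<in>S. h $ i * p i y)\<bar> \<le> e / 2 * norm h"
    using insert.IH[of "e / 2"] insert.prems by auto
  have "isCont (p j) y" using c by (simp add: continuous_on_eq_continuous_at)
  then obtain d2 where d2: "d2 > 0" "\<And>z. dist z y < d2 \<Longrightarrow> dist (p j z) (p j y) < e / 2"
    using insert.prems unfolding continuous_at_eps_delta by (metis half_gt_zero)
  show ?case
  proof (intro exI[of _ "min d1 d2"] conjI allI impI)
    fix h :: "real^'n" assume h: "norm h < min d1 d2"
    define z0 where "z0 = y + proj S h"
    have "((\<lambda>t. g (z0 + t *\<^sub>R axis j 1)) has_real_derivative p j (z0 + t *\<^sub>R axis j 1)) (at t)" for t
      by (rule has_derivative_along_line) (rule d)
    from mvt_from_0[OF this] obtain \<zeta> where \<zeta>: "\<bar>\<zeta>\<bar> \<le> \<bar>h $ j\<bar>"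
        "g (z0 + (h $ j) *\<^sub>R axis j 1) - g (z0 + 0 *\<^sub>R axis j 1) = h $ j * p j (z0 + \<zeta> *\<^sub>R axis j 1)"
      by blast
    have step: "y + proj (insert j S) h = z0 + (h $ j) *\<^sub>R axis j 1"
      using insert.hyps by (auto simp: z0_def proj_def vec_eq_iff axis_def)
    have "dist (z0 + \<zeta> *\<^sub>R axis j 1) y \<le> norm h"
      unfolding z0_def dist_norm using norm_proj_plus_axis_le[OF \<zeta>(1) insert.hyps(2)] by simp
    then have "\<bar>p j (z0 + \<zeta> *\<^sub>R axis j 1) - p j y\<bar> \<le> e / 2"
      using d2 h by (simp add: dist_real_def less_imp_le)
    then have "\<bar>h $ j\<bar> * \<bar>p j (z0 + \<zeta> *\<^sub>R axis j 1) - p j y\<bar> \<le> norm h * (e / 2)"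
      using component_le_norm_cart[of h j] by (intro mult_mono) auto
    then have A: "\<bar>h $ j * p j (z0 + \<zeta> *\<^sub>R axis j 1) - h $ j * p j y\<bar> \<le> e / 2 * norm h"
      by (simp add: abs_mult[symmetric] algebra_simps)
    have B: "\<bar>g z0 - g y - (\<Sum>i\<in>S. h $ i * p i y)\<bar> \<le> e / 2 * norm h"
      using d1 h unfolding z0_def by simp
    have "g (y + proj (insert j S) h) - g y - (\<Sum>i\<in>insert j S. h $ i * p i y)
       = (h $ j * p j (z0 + \<zeta> *\<^sub>R axis j 1) - h $ j * p j y) + (g z0 - g y - (\<Sum>i\<in>S. h $ i * p i y))"
      using \<zeta> step insert.hyps by simp
    with A B show "\<bar>g (y + proj (insert j S) h) - g y - (\<Sum>i\<in>insert j S. h $ i * p i y)\<bar> \<le> e * norm h"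
      by linarith
  qed (use d1 d2 in simp)
qed

lemma has_derivative_continuous_partials:
  fixes g :: "real^'n::finite \<Rightarrow> real"
  assumes d: "\<And>i z. ((\<lambda>t. g (z + t *\<^sub>R axis i 1)) has_real_derivative p i z) (at 0)"
    and c: "\<And>i. continuous_on UNIV (p i)"
  shows "(g has_derivative (\<lambda>h. \<Sum>i\<in>UNIV. h $ i * p i y)) (at y)"
  unfolding has_derivative_at_alt
proof (intro conjI allI impI)
  show "bounded_linear (\<lambda>h::real^'n. \<Sum>i\<in>UNIV. h $ i * p i y)"
    by (intro bounded_linear_sum bounded_linear_compose[OF bounded_linear_mult_left] bounded_linear_vec_nth)
  fix e :: real assume "e > 0"
  from partial_increment_estimate[OF d c finite this, of y] obtain r where r: "r > 0"
    "\<And>h. norm h < r \<Longrightarrow> \<bar>g (y + proj UNIV h) - g y - (\<Sum>i\<in>UNIV. h $ i * p i y)\<bar> \<le> e * norm h"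
    by blast
  have proj_UNIV: "proj UNIV h = h" for h by (simp add: proj_def vec_eq_iff)
  show "\<exists>d>0. \<forall>z. norm (z - y) < d \<longrightarrow>
      norm (g z - g y - (\<Sum>i\<in>UNIV. (z - y) $ i * p i y)) \<le> e * norm (z - y)"
  proof (intro exI[of _ r] conjI allI impI)
    fix z assume "norm (z - y) < r"
    from r(2)[OF this] show "norm (g z - g y - (\<Sum>i\<in>UNIV. (z - y) $ i * p i y)) \<le> e * norm (z - y)"
      by (simp add: proj_UNIV)
  qed (rule r)
qed


section \<open>Schwartz functions: order of differentiation and Taylor's formula\<close>

lemma schwartz_Dmi_differentiable:
  "schwartz \<phi> \<Longrightarrow> (\<lambda>t. Dmi \<alpha> \<phi> (x + t *\<^sub>R axis i 1)) differentiable (at 0)"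
  by (simp add: schwartz_def)

lemma schwartz_Dmi_continuous: "schwartz \<phi> \<Longrightarrow> continuous_on UNIV (Dmi \<alpha> \<phi>)"
  by (simp add: schwartz_def)

lemma schwartz_Dmi_bounded:
  assumes "schwartz \<phi>"
  shows "\<exists>B. \<forall>y. \<bar>Dmi \<alpha> \<phi> y\<bar> \<le> B"
proof -
  have "bounded (range (\<lambda>x. (1 + norm x) ^ 0 * Dmi \<alpha> \<phi> x))"
    using assms unfolding schwartz_def by blast
  then show ?thesis by (auto simp: bounded_iff)
qed

text \<open>By induction on \<open>|\<beta>|\<close>:
  if \<open>j\<close> is not above the smallest coordinate \<open>i\<close> used by \<open>\<beta>\<close>, this is the definition of
  \<open>D^\<beta>\<close>; otherwise \<open>D^\<beta> \<phi> = \<partial>\<^sub>i D^\<gamma> \<phi>\<close> and we swap \<open>\<partial>\<^sub>j\<close> past \<open>\<partial>\<^sub>i\<close> by Schwarz's theorem.\<close>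
lemma partial_dir_Dmi:
  fixes \<phi> :: "real^'n::{finite,linorder} \<Rightarrow> real"
  assumes S: "schwartz \<phi>"
  shows "partial_dir j (Dmi \<beta> \<phi>) = Dmi (bump \<beta> j) \<phi>"
proof (induction "mi_abs \<beta>" arbitrary: \<beta> j rule: less_induct)
  case less
  show ?case
  proof (cases "\<forall>l. \<beta> l \<noteq> 0 \<longrightarrow> j \<le> l")
    case True
    then show ?thesis by (simp add: Dmi_bump_below_support)
  next
    case False
    then obtain l0 where l0: "\<beta> l0 \<noteq> 0" "l0 < j" by (auto simp: not_le)
    define i where "i = Min {l. \<beta> l \<noteq> 0}"
    have "{l. \<beta> l \<noteq> 0} \<noteq> {}" using l0 by auto
    from Min_in[OF finite this] have \<beta>i: "\<beta> i \<noteq> 0" unfolding i_def by simp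
    have i_min: "\<forall>l. \<beta> l \<noteq> 0 \<longrightarrow> i \<le> l" unfolding i_def by (auto intro: Min_le)
    have ij: "i < j" using i_min l0 le_less_trans by blast
    define \<gamma> where "\<gamma> = \<beta>(i := \<beta> i - 1)"
    have \<gamma>\<beta>: "bump \<gamma> i = \<beta>" using \<beta>i by (auto simp: \<gamma>_def bump_def fun_eq_iff)
    have shorter: "mi_abs \<gamma> < mi_abs \<beta>" using mi_abs_bump[of \<gamma> i] \<gamma>\<beta> by simp
    have \<gamma>_min: "\<forall>l. \<gamma> l \<noteq> 0 \<longrightarrow> i \<le> l" using i_min by (auto simp: \<gamma>_def split: if_splits)
    have \<gamma>j_min: "\<forall>l. bump \<gamma> j l \<noteq> 0 \<longrightarrow> i \<le> l" using \<gamma>_min ij by (auto simp: bump_def)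
    define g where "g = Dmi \<gamma> \<phi>"
    have g_i: "Dmi \<beta> \<phi> = partial_dir i g"
      unfolding g_def using Dmi_bump_below_support[OF \<gamma>_min, of \<phi>] \<gamma>\<beta> by simp
    have g_j: "partial_dir j g = Dmi (bump \<gamma> j) \<phi>" unfolding g_def by (rule less(1)[OF shorter])
    have g_ji: "partial_dir i (partial_dir j g) = Dmi (bump \<beta> j) \<phi>"
    proof -
      have "bump (bump \<gamma> j) i = bump \<beta> j"
        using ij \<gamma>\<beta>[symmetric] by (auto simp: bump_def fun_eq_iff)
      then show ?thesis using Dmi_bump_below_support[OF \<gamma>j_min, of \<phi>] g_j by simp
    qed
    have "((\<lambda>v. partial_dir i g (x + v *\<^sub>R axis j 1)) has_real_derivative
            partial_dir i (partial_dir j g) x) (at 0)" for x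
    proof (rule mixed_partials_commute)
      show "\<forall>z. (\<lambda>t. g (z + t *\<^sub>R axis i 1)) differentiable at 0"
        unfolding g_def using schwartz_Dmi_differentiable[OF S] by blast
      show "\<forall>z. (\<lambda>t. g (z + t *\<^sub>R axis j 1)) differentiable at 0"
        unfolding g_def using schwartz_Dmi_differentiable[OF S] by blast
      show "\<forall>z. (\<lambda>t. partial_dir j g (z + t *\<^sub>R axis i 1)) differentiable at 0"
        unfolding g_j using schwartz_Dmi_differentiable[OF S] by blast
      show "continuous_on UNIV (partial_dir i (partial_dir j g))"
        unfolding g_ji by (rule schwartz_Dmi_continuous[OF S])
    qed
    then have "partial_dir j (partial_dir i g) = partial_dir i (partial_dir j g)"
      unfolding partial_dir_def[of j] by (simp add: DERIV_imp_deriv fun_eq_iff)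
    then show ?thesis using g_i g_ji by simp
  qed
qed

lemma Dmi_has_partial:
  assumes "schwartz \<phi>"
  shows "((\<lambda>t. Dmi \<beta> \<phi> (z + t *\<^sub>R axis i 1)) has_real_derivative Dmi (bump \<beta> i) \<phi> z) (at 0)"
  using partial_dir_has_derivative[OF schwartz_Dmi_differentiable[OF assms]] partial_dir_Dmi[OF assms]
  by metis

lemma Dmi_has_derivative:
  assumes "schwartz \<phi>"
  shows "(Dmi \<beta> \<phi> has_derivative (\<lambda>h. \<Sum>i\<in>UNIV. h $ i * Dmi (bump \<beta> i) \<phi> y)) (at y)"
  by (rule has_derivative_continuous_partials[OF Dmi_has_partial[OF assms] schwartz_Dmi_continuous[OF assms]])

lemma Dmi_ray_derivative:
  assumes "schwartz \<phi>"
  shows "((\<lambda>t. Dmi \<beta> \<phi> (t *\<^sub>R x)) has_real_derivative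
           (\<Sum>i\<in>UNIV. x $ i * Dmi (bump \<beta> i) \<phi> (t *\<^sub>R x))) (at t)"
proof -
  have "((\<lambda>t. Dmi \<beta> \<phi> (t *\<^sub>R x)) has_derivative
          (\<lambda>h. \<Sum>i\<in>UNIV. (h *\<^sub>R x) $ i * Dmi (bump \<beta> i) \<phi> (t *\<^sub>R x))) (at t)"
    by (rule has_derivative_compose[OF _ Dmi_has_derivative[OF assms]]) (auto intro!: derivative_eq_intros)
  then show ?thesis unfolding has_field_derivative_def
    by (rule has_derivative_eq_rhs) (simp add: fun_eq_iff sum_distrib_left mult_ac)
qed

text \<open>The \<open>m\<close>-th directional derivative \<open>((x\<cdot>\<nabla>)^m \<phi>)(y)\<close> in multinomial form.\<close>
definition dir_deriv_pow ::
    "(real^('n::{finite,linorder}) \<Rightarrow> real) \<Rightarrow> nat \<Rightarrow> real^('n::{finite,linorder}) \<Rightarrow> real^('n::{finite,linorder}) \<Rightarrow> real" where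
  "dir_deriv_pow \<phi> m x y = (\<Sum>\<alpha>\<in>{\<alpha>. mi_abs \<alpha> = m}. (fact m / mi_fact \<alpha>) * mi_pow x \<alpha> * Dmi \<alpha> \<phi> y)"

lemma dir_deriv_pow_0: "dir_deriv_pow \<phi> 0 x y = \<phi> y"
  by (simp add: dir_deriv_pow_def mi_abs_eq_0_set mi_fact_def mi_pow_def Dmi_zero)

lemma dir_deriv_pow_ray_derivative:
  assumes "schwartz \<phi>"
  shows "((\<lambda>t. dir_deriv_pow \<phi> m x (t *\<^sub>R x)) has_real_derivative dir_deriv_pow \<phi> (Suc m) x (t *\<^sub>R x)) (at t)"
proof -
  have "((\<lambda>t. dir_deriv_pow \<phi> m x (t *\<^sub>R x)) has_real_derivative
     (\<Sum>\<alpha>\<in>{\<alpha>. mi_abs \<alpha> = m}. (fact m / mi_fact \<alpha>) * mi_pow x \<alpha> *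
        (\<Sum>i\<in>UNIV. x $ i * Dmi (bump \<alpha> i) \<phi> (t *\<^sub>R x)))) (at t)"
    unfolding dir_deriv_pow_def by (intro DERIV_sum DERIV_cmult Dmi_ray_derivative[OF assms])
  then show ?thesis
    unfolding dir_deriv_pow_def by (simp only: multinomial_recurrence[where c="\<lambda>\<beta>. Dmi \<beta> \<phi> (t *\<^sub>R x)"])
qed

text \<open>One-variable Taylor remainder: if \<open>G (m+1)\<close> is the derivative of \<open>G m\<close> for all \<open>m\<close>, then
  \<open>\<Sum>m\<le>k. G m s (1-s)^m/m!\<close> has derivative \<open>G (k+1) s (1-s)^k/k!\<close> (the sum telescopes).\<close>
lemma taylor_sum_has_derivative:
  assumes "\<And>m t. (G m has_real_derivative G (Suc m) t) (at t)"
  shows "((\<lambda>s. \<Sum>m\<le>k. G m s * (1 - s) ^ m / fact m) has_real_derivative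
            G (Suc k) s * (1 - s) ^ k / fact k) (at s)"
proof (induction k)
  case 0
  then show ?case using assms by simp
next
  case (Suc k)
  have "((\<lambda>s. 1 - s) has_real_derivative -1) (at s)" by (auto intro!: derivative_eq_intros)
  from DERIV_power[OF this, of "Suc k"]
  have "((\<lambda>s. (1 - s) ^ Suc k) has_real_derivative - (real (Suc k) * (1 - s) ^ k)) (at s)" by simp
  from DERIV_cdivide[OF DERIV_mult[OF assms[of "Suc k" s] this], where c="fact (Suc k)"]
  have "((\<lambda>s. G (Suc k) s * (1 - s) ^ Suc k / fact (Suc k)) has_real_derivative
        (G (Suc (Suc k)) s * (1 - s) ^ Suc k - G (Suc k) s * (real (Suc k) * (1 - s) ^ k)) / fact (Suc k)) (at s)"
    by (simp add: algebra_simps del: fact_Suc)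
  from DERIV_add[OF Suc this]
  have "((\<lambda>s. \<Sum>m\<le>Suc k. G m s * (1 - s) ^ m / fact m) has_real_derivative
     G (Suc k) s * (1 - s) ^ k / fact k
     + (G (Suc (Suc k)) s * (1 - s) ^ Suc k - G (Suc k) s * (real (Suc k) * (1 - s) ^ k)) / fact (Suc k)) (at s)"
    by (simp add: sum.atMost_Suc)
  moreover have "G (Suc k) s * (1 - s) ^ k / fact k
     + (G (Suc (Suc k)) s * (1 - s) ^ Suc k - G (Suc k) s * (real (Suc k) * (1 - s) ^ k)) / fact (Suc k)
     = G (Suc (Suc k)) s * (1 - s) ^ Suc k / fact (Suc k)"
  proof -
    have "(fact k :: real) > 0" "real (Suc k) > 0" by auto
    then show ?thesis by (simp add: field_simps del: of_nat_Suc)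
  qed
  ultimately show ?case by simp
qed

lemma taylor_along_ray:
  assumes "schwartz \<phi>"
  shows "((\<lambda>s. dir_deriv_pow \<phi> (Suc k) x (s *\<^sub>R x) * (1 - s) ^ k / fact k) has_integral
          (\<phi> x - (\<Sum>m\<le>k. dir_deriv_pow \<phi> m x 0 / fact m))) {0..1}"
proof -
  define G where "G m t = dir_deriv_pow \<phi> m x (t *\<^sub>R x)" for m t
  have G_deriv: "(G m has_real_derivative G (Suc m) t) (at t)" for m t
    unfolding G_def by (rule dir_deriv_pow_ray_derivative[OF assms])
  have "((\<lambda>s. G (Suc k) s * (1 - s) ^ k / fact k) has_integral
      ((\<Sum>m\<le>k. G m 1 * (1 - 1) ^ m / fact m) - (\<Sum>m\<le>k. G m 0 * (1 - 0) ^ m / fact m))) {0..1}"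
    by (rule fundamental_theorem_of_calculus)
       (auto simp: has_real_derivative_iff_has_vector_derivative[symmetric]
             intro!: has_field_derivative_at_within taylor_sum_has_derivative G_deriv)
  moreover have "(\<Sum>m\<le>k. G m 1 * (1 - 1) ^ m / fact m) = \<phi> x"
    by (simp add: sum.atMost_shift G_def dir_deriv_pow_0 zero_power del: sum.atMost_Suc)
  ultimately show ?thesis by (simp add: G_def)
qed

definition ray_average ::
    "(real^('n::{finite,linorder}) \<Rightarrow> real) \<Rightarrow> nat \<Rightarrow> ('n::{finite,linorder} \<Rightarrow> nat) \<Rightarrow> real^('n::{finite,linorder}) \<Rightarrow> real" where
  "ray_average \<phi> k \<alpha> x = (\<integral>s. indicator {0..1} s * (1 - s) ^ k * Dmi \<alpha> \<phi> (s *\<^sub>R x) \<partial>lborel)"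

lemma ray_average_integrable:
  assumes "schwartz \<phi>"
  shows "integrable lborel (\<lambda>s. indicator {0..1} s * (1 - s) ^ k * Dmi \<alpha> \<phi> (s *\<^sub>R x))"
proof -
  have "continuous_on {0..1::real} (\<lambda>s. (1 - s) ^ k * Dmi \<alpha> \<phi> (s *\<^sub>R x))"
    by (intro continuous_intros continuous_on_compose2[OF schwartz_Dmi_continuous[OF assms]]) auto
  from borel_integrable_compact[OF compact_Icc this] show ?thesis by (simp add: mult.assoc)
qed

lemma taylor_formula:
  assumes S: "schwartz \<phi>"
  shows "\<phi> x = (\<Sum>\<alpha>\<in>{\<alpha>. mi_abs \<alpha> \<le> k}. Dmi \<alpha> \<phi> 0 / mi_fact \<alpha> * mi_pow x \<alpha>) +
     (\<Sum>\<alpha>\<in>{\<alpha>. mi_abs \<alpha> = Suc k}. (real k + 1) / mi_fact \<alpha> * (mi_pow x \<alpha> * ray_average \<phi> k \<alpha> x))"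
proof -
  define g where "g s = dir_deriv_pow \<phi> (Suc k) x (s *\<^sub>R x) * (1 - s) ^ k / fact k" for s :: real
  have "continuous_on {0..1} g" unfolding g_def
    by (intro continuous_intros continuous_at_imp_continuous_on ballI
          DERIV_isCont[OF dir_deriv_pow_ray_derivative[OF S]]) auto
  from borel_integrable_compact[OF compact_Icc this]
  have "set_integrable lborel {0..1::real} g" by (simp add: set_integrable_def)
  from set_borel_integral_eq_integral(2)[OF this]
  have "integral {0..1} g = (\<integral>s. indicator {0..1} s * g s \<partial>lborel)"
    by (simp add: set_lebesgue_integral_def)
  moreover have "integral {0..1} g = \<phi> x - (\<Sum>m\<le>k. dir_deriv_pow \<phi> m x 0 / fact m)"
    unfolding g_def by (rule integral_unique[OF taylor_along_ray[OF S]])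
  ultimately have "\<phi> x - (\<Sum>m\<le>k. dir_deriv_pow \<phi> m x 0 / fact m) = (\<integral>s. indicator {0..1} s * g s \<partial>lborel)"
    by simp
  also have "\<dots> = (\<integral>s. (\<Sum>\<alpha>\<in>{\<alpha>. mi_abs \<alpha> = Suc k}. (fact (Suc k) / mi_fact \<alpha> * mi_pow x \<alpha> / fact k) *
         (indicator {0..1} s * (1 - s) ^ k * Dmi \<alpha> \<phi> (s *\<^sub>R x))) \<partial>lborel)"
    by (intro Bochner_Integration.integral_cong refl)
       (simp add: g_def dir_deriv_pow_def sum_distrib_left sum_distrib_right sum_divide_distrib mult_ac)
  also have "\<dots> = (\<Sum>\<alpha>\<in>{\<alpha>. mi_abs \<alpha> = Suc k}. (fact (Suc k) / mi_fact \<alpha> * mi_pow x \<alpha> / fact k) * ray_average \<phi> k \<alpha> x)"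
    unfolding ray_average_def
    by (subst Bochner_Integration.integral_sum) (auto intro!: integrable_mult_right ray_average_integrable[OF S])
  also have "\<dots> = (\<Sum>\<alpha>\<in>{\<alpha>. mi_abs \<alpha> = Suc k}. (real k + 1) / mi_fact \<alpha> * (mi_pow x \<alpha> * ray_average \<phi> k \<alpha> x))"
    by (intro sum.cong refl) (simp add: divide_simps ring_distribs)
  finally have "\<phi> x = (\<Sum>m\<le>k. dir_deriv_pow \<phi> m x 0 / fact m) +
     (\<Sum>\<alpha>\<in>{\<alpha>. mi_abs \<alpha> = Suc k}. (real k + 1) / mi_fact \<alpha> * (mi_pow x \<alpha> * ray_average \<phi> k \<alpha> x))"
    by simp
  moreover have "(\<Sum>m\<le>k. dir_deriv_pow \<phi> m x 0 / fact m)
      = (\<Sum>\<alpha>\<in>{\<alpha>. mi_abs \<alpha> \<le> k}. Dmi \<alpha> \<phi> 0 / mi_fact \<alpha> * mi_pow x \<alpha>)"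
    by (simp add: sum_mi_abs_le_by_degree dir_deriv_pow_def sum_divide_distrib mult_ac)
  ultimately show ?thesis by simp
qed


section \<open>Dilations of Lebesgue measure and moments\<close>

lemma nn_integral_dilation:
  fixes h :: "'a::euclidean_space \<Rightarrow> ennreal" and c :: real
  assumes [measurable]: "h \<in> borel_measurable borel" and c: "c \<noteq> 0"
  shows "(\<integral>\<^sup>+x. h x \<partial>lborel) = ennreal (\<bar>c\<bar> ^ DIM('a)) * (\<integral>\<^sup>+x. h (c *\<^sub>R x) \<partial>lborel)"
  by (subst lborel_affine[OF c, of 0]) (simp add: nn_integral_density nn_integral_distr nn_integral_cmult)

lemma integrable_dilation_iff:
  fixes h :: "'a::euclidean_space \<Rightarrow> real" and c :: real
  assumes [measurable]: "h \<in> borel_measurable borel" and c: "c \<noteq> 0"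
  shows "integrable lborel (\<lambda>x. h (c *\<^sub>R x)) \<longleftrightarrow> integrable lborel h"
proof -
  have "(\<integral>\<^sup>+x. ennreal (norm (h x)) \<partial>lborel)
      = ennreal (\<bar>c\<bar> ^ DIM('a)) * (\<integral>\<^sup>+x. ennreal (norm (h (c *\<^sub>R x))) \<partial>lborel)"
    by (rule nn_integral_dilation) (use c in auto)
  moreover have "\<bar>c\<bar> ^ DIM('a) > 0" using c by simp
  ultimately show ?thesis
    unfolding integrable_iff_bounded by (auto simp: ennreal_mult_less_top)
qed

lemma integral_dilation:
  fixes h :: "'a::euclidean_space \<Rightarrow> real" and c :: real
  assumes [measurable]: "h \<in> borel_measurable borel" and c: "c \<noteq> 0"
  shows "(\<integral>x. h x \<partial>lborel) = \<bar>c\<bar> ^ DIM('a) * (\<integral>x. h (c *\<^sub>R x) \<partial>lborel)"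
proof (cases "integrable lborel h")
  case True
  then have "integrable lborel (\<lambda>x. h (c *\<^sub>R x))" using integrable_dilation_iff[of h c] c by simp
  with c show ?thesis
    by (subst lborel_affine[OF c, of 0]) (simp add: integral_density integral_distr comp_def)
next
  case False
  then have "\<not> integrable lborel (\<lambda>x. h (c *\<^sub>R x))" using integrable_dilation_iff[of h c] c by simp
  with False show ?thesis by (simp add: not_integrable_integral_eq)
qed

lemma mi_pow_borel_measurable[measurable (raw)]:
  "g \<in> M \<rightarrow>\<^sub>M borel \<Longrightarrow> (\<lambda>x. mi_pow (g x :: real^'n::finite) \<alpha>) \<in> borel_measurable M"
proof -
  have "continuous_on UNIV (\<lambda>x::real^'n. mi_pow x \<alpha>)"
    unfolding mi_pow_def by (intro continuous_intros)
  from measurable_compose[OF _ borel_measurable_continuous_onI[OF this]] show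
    "g \<in> M \<rightarrow>\<^sub>M borel \<Longrightarrow> (\<lambda>x. mi_pow (g x) \<alpha>) \<in> borel_measurable M" by blast
qed

lemma abs_mi_pow_le: "\<bar>mi_pow x \<alpha>\<bar> \<le> norm x ^ mi_abs \<alpha>"
proof -
  have "\<bar>mi_pow x \<alpha>\<bar> = (\<Prod>i\<in>UNIV. \<bar>x $ i\<bar> ^ \<alpha> i)" by (simp add: mi_pow_def abs_prod power_abs)
  also have "\<dots> \<le> (\<Prod>i\<in>UNIV. norm x ^ \<alpha> i)"
    by (intro prod_mono conjI power_mono component_le_norm_cart) auto
  also have "\<dots> = norm x ^ mi_abs \<alpha>" by (simp add: mi_abs_def power_sum)
  finally show ?thesis .
qed

lemma pow_le_one_plus_pow: "(r::real) \<ge> 0 \<Longrightarrow> m \<le> n \<Longrightarrow> r ^ m \<le> 1 + r ^ n"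
  by (cases "r \<le> 1") (auto intro: order_trans[OF power_le_one] order_trans[OF power_increasing])

lemma integrable_one_minus_pow: "integrable lborel (\<lambda>s::real. indicator {0..1} s * (1 - s) ^ k)"
proof -
  have "continuous_on {0..1::real} (\<lambda>s. (1 - s) ^ k)" by (intro continuous_intros)
  from borel_integrable_compact[OF compact_Icc this] show ?thesis by simp
qed

lemma integral_one_minus_pow: "(\<integral>s. indicator {0..1} s * (1 - s) ^ k \<partial>lborel) = 1 / (real k + 1)"
proof -
  have "((\<lambda>s. - ((1 - s) ^ (k + 1)) / (real k + 1)) has_real_derivative (1 - x) ^ k) (at x)" for x :: real
  proof -
    have "((\<lambda>s. 1 - s) has_real_derivative -1) (at x)" by (auto intro!: derivative_eq_intros)
    from DERIV_cdivide[OF DERIV_minus[OF DERIV_power[OF this, of "k + 1"]], of "real k + 1"]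
    have "((\<lambda>s. - ((1 - s) ^ (k + 1)) / (real k + 1)) has_real_derivative
            (1 + real k) * (1 - x) ^ k / (real k + 1)) (at x)"
      by simp
    moreover have "real k + 1 \<noteq> 0" by linarith
    ultimately show ?thesis by (simp add: add.commute)
  qed
  then have "((\<lambda>s::real. (1 - s) ^ k) has_integral 1 / (real k + 1)) {0..1}"
    using fundamental_theorem_of_calculus[of 0 1 "\<lambda>s. - ((1 - s) ^ (k + 1)) / (real k + 1)" "\<lambda>s. (1 - s) ^ k"]
    by (simp add: has_real_derivative_iff_has_vector_derivative[symmetric] has_field_derivative_at_within)
  moreover have "set_integrable lborel {0..1::real} (\<lambda>s. (1 - s) ^ k)"
    using integrable_one_minus_pow[of k] by (simp add: set_integrable_def)
  from set_borel_integral_eq_integral(2)[OF this]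
  have "(\<integral>s. indicator {0..1} s * (1 - s) ^ k \<partial>lborel) = integral {0..1::real} (\<lambda>s. (1 - s) ^ k)"
    by (simp add: set_lebesgue_integral_def)
  ultimately show ?thesis by (simp add: integral_unique)
qed

lemma integrable_tensor:
  fixes u :: "'a::euclidean_space \<Rightarrow> real" and v :: "'b::euclidean_space \<Rightarrow> real"
  assumes u: "integrable lborel u" and v: "integrable lborel v"
  shows "integrable (lborel \<Otimes>\<^sub>M lborel) (\<lambda>(s, x). u s * v x)"
proof (rule lborel_pair.Fubini_integrable)
  have [measurable]: "u \<in> borel_measurable borel" "v \<in> borel_measurable borel"
    using u v by (simp_all add: borel_measurable_integrable)
  show "(\<lambda>(s, x). u s * v x) \<in> borel_measurable (lborel \<Otimes>\<^sub>M lborel)" by measurable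
  show "AE s in lborel. integrable lborel (\<lambda>x. case (s, x) of (s, x) \<Rightarrow> u s * v x)"
    using v by (simp add: integrable_mult_right)
  show "integrable lborel (\<lambda>s. \<integral>x. norm (case (s, x) of (s, x) \<Rightarrow> u s * v x) \<partial>lborel)"
    using integrable_mult_left[OF integrable_abs[OF u], of "\<integral>x. \<bar>v x\<bar> \<partial>lborel"] by (simp add: abs_mult)
qed

section \<open>The remainder profiles\<close>

text \<open>For \<open>|\<alpha>| = k + 1\<close> the function \<open>F_\<alpha>\<close> of the theorem is
  \<open>(-1)^|\<alpha>| (k+1)/\<alpha>!\<close> times this profile.\<close>
definition remainder_kernel ::
    "(real^'n::finite \<Rightarrow> real) \<Rightarrow> nat \<Rightarrow> ('n \<Rightarrow> nat) \<Rightarrow> real \<Rightarrow> real^'n \<Rightarrow> real" where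
  "remainder_kernel f k \<alpha> s y =
     indicator {0..1} s * ((1 - s) ^ k / s ^ (DIM(real^'n) + k + 1)) * (mi_pow y \<alpha> * f (inverse s *\<^sub>R y))"

definition remainder_profile :: "(real^'n::finite \<Rightarrow> real) \<Rightarrow> nat \<Rightarrow> ('n \<Rightarrow> nat) \<Rightarrow> real^'n \<Rightarrow> real" where
  "remainder_profile f k \<alpha> y = (\<integral>s. remainder_kernel f k \<alpha> s y \<partial>lborel)"

context
  fixes f :: "real^'n::finite \<Rightarrow> real" and k :: nat
  assumes f_weighted: "integrable lborel (\<lambda>x. f x * (1 + norm x ^ (k + 1)))"
begin

lemma f_borel_measurable[measurable]: "f \<in> borel_measurable borel"
proof -
  have "(\<lambda>x. (f x * (1 + norm x ^ (k + 1))) / (1 + norm x ^ (k + 1))) \<in> borel_measurable borel"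
    using borel_measurable_integrable[OF f_weighted] by measurable
  moreover have "(\<lambda>x. (f x * (1 + norm x ^ (k + 1))) / (1 + norm x ^ (k + 1))) = f"
  proof
    fix x :: "real^'n"
    have "1 + norm x ^ (k + 1) > 0" by (simp add: add_pos_nonneg)
    then show "(f x * (1 + norm x ^ (k + 1))) / (1 + norm x ^ (k + 1)) = f x" by simp
  qed
  ultimately show ?thesis by simp
qed

lemma moment_integrable:
  assumes "mi_abs \<alpha> \<le> k + 1"
  shows "integrable lborel (\<lambda>x. mi_pow x \<alpha> * f x)"
proof (rule Bochner_Integration.integrable_bound[OF f_weighted])
  show "AE x in lborel. norm (mi_pow x \<alpha> * f x) \<le> norm (f x * (1 + norm x ^ (k + 1)))"
  proof (rule AE_I2)
    fix x :: "real^'n"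
    have "\<bar>mi_pow x \<alpha>\<bar> \<le> 1 + norm x ^ (k + 1)"
      using abs_mi_pow_le[of x \<alpha>] pow_le_one_plus_pow[OF norm_ge_zero assms, of x] by linarith
    then have "\<bar>mi_pow x \<alpha>\<bar> * \<bar>f x\<bar> \<le> (1 + norm x ^ (k + 1)) * \<bar>f x\<bar>"
      by (rule mult_right_mono) simp
    then show "norm (mi_pow x \<alpha> * f x) \<le> norm (f x * (1 + norm x ^ (k + 1)))"
      by (simp add: abs_mult mult.commute add_nonneg_nonneg)
  qed
qed measurable

lemma dilated_moment:
  assumes s: "s \<noteq> 0" and "mi_abs \<alpha> \<le> k + 1"
  shows "integrable lborel (\<lambda>y. mi_pow y \<alpha> * f (inverse s *\<^sub>R y))"
    and "(\<integral>y. \<bar>mi_pow y \<alpha> * f (inverse s *\<^sub>R y)\<bar> \<partial>lborel)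
          = \<bar>s\<bar> ^ (DIM(real^'n) + mi_abs \<alpha>) * (\<integral>x. \<bar>mi_pow x \<alpha> * f x\<bar> \<partial>lborel)"
proof -
  define h where "h y = mi_pow y \<alpha> * f (inverse s *\<^sub>R y)" for y :: "real^'n"
  have [measurable]: "h \<in> borel_measurable borel" unfolding h_def by measurable
  have hs: "h (s *\<^sub>R x) = s ^ mi_abs \<alpha> * (mi_pow x \<alpha> * f x)" for x
    using s by (simp add: h_def mi_pow_scaleR)
  have "integrable lborel (\<lambda>x. h (s *\<^sub>R x))"
    unfolding hs using moment_integrable[OF assms(2)] by simp
  then show "integrable lborel (\<lambda>y. mi_pow y \<alpha> * f (inverse s *\<^sub>R y))"
    using integrable_dilation_iff[of h s] s by (simp add: h_def[abs_def])
  have "(\<integral>y. \<bar>h y\<bar> \<partial>lborel) = \<bar>s\<bar> ^ DIM(real^'n) * (\<integral>x. \<bar>h (s *\<^sub>R x)\<bar> \<partial>lborel)"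
    by (rule integral_dilation) (use s in auto)
  then show "(\<integral>y. \<bar>mi_pow y \<alpha> * f (inverse s *\<^sub>R y)\<bar> \<partial>lborel)
          = \<bar>s\<bar> ^ (DIM(real^'n) + mi_abs \<alpha>) * (\<integral>x. \<bar>mi_pow x \<alpha> * f x\<bar> \<partial>lborel)"
    by (simp add: h_def[symmetric] hs abs_mult power_abs power_add)
qed

lemma remainder_kernel_measurable[measurable]:
  "(\<lambda>(s, y). remainder_kernel f k \<alpha> s y) \<in> borel_measurable (lborel \<Otimes>\<^sub>M lborel)"
  unfolding remainder_kernel_def by measurable

text \<open>For fixed \<open>s \<noteq> 0\<close> the kernel is integrable in \<open>y\<close>, with \<open>L^1\<close>-norm \<open>(1-s)^k \<parallel>x^\<alpha> f\<parallel>_1\<close>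
  on \<open>[0,1]\<close>: the factor \<open>s^(-n-k-1)\<close> exactly compensates the dilation.\<close>
lemma remainder_kernel_slice:
  assumes s: "s \<noteq> 0" and a: "mi_abs \<alpha> = k + 1"
  shows "integrable lborel (remainder_kernel f k \<alpha> s)"
    and "(\<integral>y. \<bar>remainder_kernel f k \<alpha> s y\<bar> \<partial>lborel)
          = indicator {0..1} s * (1 - s) ^ k * (\<integral>x. \<bar>mi_pow x \<alpha> * f x\<bar> \<partial>lborel)"
proof -
  note dm = dilated_moment[OF s, of \<alpha>]
  show "integrable lborel (remainder_kernel f k \<alpha> s)"
    unfolding remainder_kernel_def using dm(1) a by (intro integrable_mult_right) simp
  show "(\<integral>y. \<bar>remainder_kernel f k \<alpha> s y\<bar> \<partial>lborel)
          = indicator {0..1} s * (1 - s) ^ k * (\<integral>x. \<bar>mi_pow x \<alpha> * f x\<bar> \<partial>lborel)"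
  proof (cases "s \<in> {0..1}")
    case True
    with s have s0: "s > 0" by auto
    let ?c = "(1 - s) ^ k / s ^ (DIM(real^'n) + k + 1)"
    have "?c \<ge> 0" using True by simp
    then have "(\<integral>y. \<bar>remainder_kernel f k \<alpha> s y\<bar> \<partial>lborel) = ?c * (\<integral>y. \<bar>mi_pow y \<alpha> * f (inverse s *\<^sub>R y)\<bar> \<partial>lborel)"
      using True by (simp add: remainder_kernel_def abs_mult)
    also have "\<dots> = ?c * (s ^ (DIM(real^'n) + (k + 1)) * (\<integral>x. \<bar>mi_pow x \<alpha> * f x\<bar> \<partial>lborel))"
      using dm(2) s0 a by simp
    finally show ?thesis using True s0 by simp
  qed (simp add: remainder_kernel_def)
qed

lemma remainder_kernel_integrable:
  assumes a: "mi_abs \<alpha> = k + 1"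
  shows "integrable (lborel \<Otimes>\<^sub>M lborel) (\<lambda>(s, y). remainder_kernel f k \<alpha> s y)"
proof (rule lborel_pair.Fubini_integrable)
  show "AE s in lborel. integrable lborel (\<lambda>y. case (s, y) of (s, y) \<Rightarrow> remainder_kernel f k \<alpha> s y)"
    using AE_lborel_singleton[of 0] by eventually_elim (use remainder_kernel_slice[OF _ a] in auto)
  have "integrable lborel (\<lambda>s. indicator {0..1} s * (1 - s) ^ k * (\<integral>x. \<bar>mi_pow x \<alpha> * f x\<bar> \<partial>lborel))"
    using integrable_one_minus_pow[of k] by (intro integrable_mult_left)
  then show "integrable lborel (\<lambda>s. \<integral>y. norm (case (s, y) of (s, y) \<Rightarrow> remainder_kernel f k \<alpha> s y) \<partial>lborel)"
  proof (rule integrable_cong_AE_imp)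
    show "AE s in lborel. indicator {0..1} s * (1 - s) ^ k * (\<integral>x. \<bar>mi_pow x \<alpha> * f x\<bar> \<partial>lborel) =
        (\<integral>y. norm (case (s, y) of (s, y) \<Rightarrow> remainder_kernel f k \<alpha> s y) \<partial>lborel)"
      using AE_lborel_singleton[of 0] by eventually_elim (use remainder_kernel_slice[OF _ a] in auto)
  qed measurable
qed measurable

lemma remainder_profile_integrable:
  assumes "mi_abs \<alpha> = k + 1"
  shows "integrable lborel (remainder_profile f k \<alpha>)"
  unfolding remainder_profile_def[abs_def]
  using lborel_pair.integrable_snd[OF remainder_kernel_integrable[OF assms]] by simp

lemma remainder_profile_L1_bound:
  assumes a: "mi_abs \<alpha> = k + 1"
  shows "(\<integral>y. \<bar>remainder_profile f k \<alpha> y\<bar> \<partial>lborel) \<le> (\<integral>x. \<bar>mi_pow x \<alpha> * f x\<bar> \<partial>lborel) / (real k + 1)"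
proof -
  define N where "N = (\<integral>x. \<bar>mi_pow x \<alpha> * f x\<bar> \<partial>lborel)"
  have abs_int: "integrable (lborel \<Otimes>\<^sub>M lborel) (\<lambda>(s, y). \<bar>remainder_kernel f k \<alpha> s y\<bar>)"
    using integrable_abs[OF remainder_kernel_integrable[OF a]] unfolding case_prod_unfold by simp
  have "(\<integral>y. \<bar>remainder_profile f k \<alpha> y\<bar> \<partial>lborel) \<le> (\<integral>y. (\<integral>s. \<bar>remainder_kernel f k \<alpha> s y\<bar> \<partial>lborel) \<partial>lborel)"
  proof (rule integral_mono)
    show "integrable lborel (\<lambda>y. \<bar>remainder_profile f k \<alpha> y\<bar>)"
      using remainder_profile_integrable[OF a] by simp
    show "integrable lborel (\<lambda>y. \<integral>s. \<bar>remainder_kernel f k \<alpha> s y\<bar> \<partial>lborel)"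
      using lborel_pair.integrable_snd[OF abs_int] by simp
  qed (simp add: remainder_profile_def integral_norm_bound[of lborel, simplified])
  also have "\<dots> = (\<integral>s. (\<integral>y. \<bar>remainder_kernel f k \<alpha> s y\<bar> \<partial>lborel) \<partial>lborel)"
    using lborel_pair.Fubini_integral[OF abs_int] by simp
  also have "\<dots> = (\<integral>s. indicator {0..1} s * (1 - s) ^ k * N \<partial>lborel)"
  proof (rule integral_cong_AE)
    show "AE s in lborel. (\<integral>y. \<bar>remainder_kernel f k \<alpha> s y\<bar> \<partial>lborel) = indicator {0..1} s * (1 - s) ^ k * N"
      using AE_lborel_singleton[of 0]
      by eventually_elim (use remainder_kernel_slice[OF _ a] in \<open>auto simp: N_def\<close>)
  qed measurable
  also have "\<dots> = N / (real k + 1)" using integral_one_minus_pow[of k] by simp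
  finally show ?thesis by (simp add: N_def)
qed


lemma normalised_profile_L1_bound:
  assumes a: "mi_abs \<alpha> = k + 1"
  shows "(\<integral>y. \<bar>(-1) ^ mi_abs \<alpha> * ((real k + 1) / mi_fact \<alpha>) * remainder_profile f k \<alpha> y\<bar> \<partial>lborel)
          \<le> (\<integral>x. \<bar>mi_pow x \<alpha> * f x\<bar> \<partial>lborel) / mi_fact \<alpha>"
proof -
  have c: "(real k + 1) / mi_fact \<alpha> \<ge> 0" using mi_fact_pos[of \<alpha>] by simp
  have "(\<integral>y. \<bar>(-1) ^ mi_abs \<alpha> * ((real k + 1) / mi_fact \<alpha>) * remainder_profile f k \<alpha> y\<bar> \<partial>lborel)
      = (real k + 1) / mi_fact \<alpha> * (\<integral>y. \<bar>remainder_profile f k \<alpha> y\<bar> \<partial>lborel)"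
    using c mi_fact_pos[of \<alpha>] by (simp add: abs_mult)
  also have "\<dots> \<le> (real k + 1) / mi_fact \<alpha> * ((\<integral>x. \<bar>mi_pow x \<alpha> * f x\<bar> \<partial>lborel) / (real k + 1))"
    by (rule mult_left_mono[OF remainder_profile_L1_bound[OF a] c])
  also have "\<dots> = (\<integral>x. \<bar>mi_pow x \<alpha> * f x\<bar> \<partial>lborel) / mi_fact \<alpha>"
    by (simp add: add_pos_nonneg)
  finally show ?thesis .
qed

lemma remainder_slice_dilation:
  assumes a: "mi_abs \<alpha> = k + 1" and s: "s \<noteq> 0" and [measurable]: "D \<in> borel_measurable borel"
  shows "(\<integral>x. indicator {0..1} s * (1 - s) ^ k * D (s *\<^sub>R x) * (mi_pow x \<alpha> * f x) \<partial>lborel)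
       = (\<integral>y. remainder_kernel f k \<alpha> s y * D y \<partial>lborel)"
proof (cases "s \<in> {0..1}")
  case True
  with s have s0: "s > 0" by auto
  define h where "h y = mi_pow y \<alpha> * f (inverse s *\<^sub>R y) * D y" for y :: "real^'n"
  have [measurable]: "h \<in> borel_measurable borel" unfolding h_def by measurable
  have hs: "h (s *\<^sub>R x) = s ^ (k + 1) * (D (s *\<^sub>R x) * (mi_pow x \<alpha> * f x))" for x
    using s a by (simp add: h_def mi_pow_scaleR mult_ac)
  have "(\<integral>y. h y \<partial>lborel) = s ^ DIM(real^'n) * (\<integral>x. h (s *\<^sub>R x) \<partial>lborel)"
    using integral_dilation[of h s] s0 by simp
  also have "\<dots> = s ^ (DIM(real^'n) + k + 1) * (\<integral>x. D (s *\<^sub>R x) * (mi_pow x \<alpha> * f x) \<partial>lborel)"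
    by (simp add: hs power_add)
  finally have dilated: "(\<integral>x. D (s *\<^sub>R x) * (mi_pow x \<alpha> * f x) \<partial>lborel)
      = (\<integral>y. h y \<partial>lborel) / s ^ (DIM(real^'n) + k + 1)"
    using s0 by (simp add: field_simps)
  have "(\<integral>x. indicator {0..1} s * (1 - s) ^ k * D (s *\<^sub>R x) * (mi_pow x \<alpha> * f x) \<partial>lborel)
      = (\<integral>x. (1 - s) ^ k * (D (s *\<^sub>R x) * (mi_pow x \<alpha> * f x)) \<partial>lborel)"
    using True by (intro Bochner_Integration.integral_cong) auto
  also have "\<dots> = (1 - s) ^ k / s ^ (DIM(real^'n) + k + 1) * (\<integral>y. h y \<partial>lborel)"
    by (simp add: dilated)
  also have "\<dots> = (\<integral>y. (1 - s) ^ k / s ^ (DIM(real^'n) + k + 1) * h y \<partial>lborel)"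
    by simp
  also have "\<dots> = (\<integral>y. remainder_kernel f k \<alpha> s y * D y \<partial>lborel)"
    using True by (intro Bochner_Integration.integral_cong) (auto simp: remainder_kernel_def h_def)
  finally show ?thesis .
qed (simp add: remainder_kernel_def)

text \<open>The integrands of the two sides of the remainder pairing are integrable on
  \<open>[0,1] \<times> \<real>^n\<close>, dominated by \<open>B (1-s)^k |x^\<alpha> f x|\<close> and by \<open>B |kernel|\<close>.\<close>
lemma ray_pairing_integrable:
  assumes a: "mi_abs \<alpha> \<le> k + 1"
    and [measurable]: "D \<in> borel_measurable borel" and D_bound: "\<And>y. \<bar>D y\<bar> \<le> B"
  shows "integrable (lborel \<Otimes>\<^sub>M lborel)
           (\<lambda>(s, x). indicator {0..1} s * (1 - s) ^ k * D (s *\<^sub>R x) * (mi_pow x \<alpha> * f x))"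
proof (rule Bochner_Integration.integrable_bound)
  show "integrable (lborel \<Otimes>\<^sub>M lborel)
          (\<lambda>(s, x). (indicator {0..1} s * (1 - s) ^ k) * (B * \<bar>mi_pow x \<alpha> * f x\<bar>))"
    using moment_integrable[OF a]
    by (intro integrable_tensor integrable_one_minus_pow integrable_mult_right integrable_abs)
  have "B \<ge> 0" using D_bound[of 0] by linarith
  show "AE p in lborel \<Otimes>\<^sub>M lborel.
          norm (case p of (s, x) \<Rightarrow> indicator {0..1} s * (1 - s) ^ k * D (s *\<^sub>R x) * (mi_pow x \<alpha> * f x))
          \<le> norm (case p of (s, x) \<Rightarrow> indicator {0..1} s * (1 - s) ^ k * (B * \<bar>mi_pow x \<alpha> * f x\<bar>))"
  proof (rule AE_I2, clarify)
    fix s :: real and x :: "real^'n"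
    have "\<bar>D (s *\<^sub>R x)\<bar> * \<bar>mi_pow x \<alpha> * f x\<bar> \<le> B * \<bar>mi_pow x \<alpha> * f x\<bar>"
      by (rule mult_right_mono[OF D_bound]) simp
    with \<open>B \<ge> 0\<close> show "norm (indicator {0..1} s * (1 - s) ^ k * D (s *\<^sub>R x) * (mi_pow x \<alpha> * f x))
        \<le> norm (indicator {0..1} s * (1 - s) ^ k * (B * \<bar>mi_pow x \<alpha> * f x\<bar>))"
      by (auto simp: abs_mult indicator_def mult.assoc intro!: mult_left_mono)
  qed
qed measurable

lemma kernel_pairing_integrable:
  assumes a: "mi_abs \<alpha> = k + 1"
    and [measurable]: "D \<in> borel_measurable borel" and D_bound: "\<And>y. \<bar>D y\<bar> \<le> B"
  shows "integrable (lborel \<Otimes>\<^sub>M lborel) (\<lambda>(s, y). remainder_kernel f k \<alpha> s y * D y)"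
  using integrable_mult_right[OF integrable_abs[OF remainder_kernel_integrable[OF a]], of B]
proof (rule Bochner_Integration.integrable_bound)
  have "B \<ge> 0" using D_bound[of 0] by linarith
  show "AE p in lborel \<Otimes>\<^sub>M lborel. norm (case p of (s, y) \<Rightarrow> remainder_kernel f k \<alpha> s y * D y)
      \<le> norm (B * \<bar>case p of (s, y) \<Rightarrow> remainder_kernel f k \<alpha> s y\<bar>)"
  proof (rule AE_I2, clarify)
    fix s :: real and y :: "real^'n"
    have "\<bar>D y\<bar> * \<bar>remainder_kernel f k \<alpha> s y\<bar> \<le> B * \<bar>remainder_kernel f k \<alpha> s y\<bar>"
      by (rule mult_right_mono[OF D_bound]) simp
    with \<open>B \<ge> 0\<close> show "norm (remainder_kernel f k \<alpha> s y * D y) \<le> norm (B * \<bar>remainder_kernel f k \<alpha> s y\<bar>)"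
      by (simp add: abs_mult mult.commute)
  qed
qed measurable

lemma remainder_pairing:
  assumes a: "mi_abs \<alpha> = k + 1"
    and [measurable]: "D \<in> borel_measurable borel" and D_bound: "\<And>y. \<bar>D y\<bar> \<le> B"
  shows "integrable lborel (\<lambda>x. (\<integral>s. indicator {0..1} s * (1 - s) ^ k * D (s *\<^sub>R x) \<partial>lborel) * (mi_pow x \<alpha> * f x))"
    and "(\<integral>x. (\<integral>s. indicator {0..1} s * (1 - s) ^ k * D (s *\<^sub>R x) \<partial>lborel) * (mi_pow x \<alpha> * f x) \<partial>lborel)
         = (\<integral>y. remainder_profile f k \<alpha> y * D y \<partial>lborel)"
proof -
  define g1 where "g1 s x = indicator {0..1} s * (1 - s) ^ k * D (s *\<^sub>R x) * (mi_pow x \<alpha> * f x)"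
    for s and x :: "real^'n"
  define g2 where "g2 s y = remainder_kernel f k \<alpha> s y * D y" for s and y :: "real^'n"
  have [measurable]: "(\<lambda>(s, x). g1 s x) \<in> borel_measurable (lborel \<Otimes>\<^sub>M lborel)"
    "(\<lambda>(s, x). g2 s x) \<in> borel_measurable (lborel \<Otimes>\<^sub>M lborel)"
    unfolding g1_def g2_def by measurable
  have g1_int: "integrable (lborel \<Otimes>\<^sub>M lborel) (\<lambda>(s, x). g1 s x)"
    unfolding g1_def using a by (intro ray_pairing_integrable[OF _ _ D_bound]) auto
  have g2_int: "integrable (lborel \<Otimes>\<^sub>M lborel) (\<lambda>(s, y). g2 s y)"
    unfolding g2_def by (rule kernel_pairing_integrable[OF a _ D_bound]) simp
  have slice: "(\<integral>s. g1 s x \<partial>lborel)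
      = (\<integral>s. indicator {0..1} s * (1 - s) ^ k * D (s *\<^sub>R x) \<partial>lborel) * (mi_pow x \<alpha> * f x)" for x
    unfolding g1_def by simp
  from lborel_pair.integrable_snd[OF g1_int]
  show "integrable lborel (\<lambda>x. (\<integral>s. indicator {0..1} s * (1 - s) ^ k * D (s *\<^sub>R x) \<partial>lborel) * (mi_pow x \<alpha> * f x))"
    by (simp add: slice)
  have "(\<integral>x. (\<integral>s. indicator {0..1} s * (1 - s) ^ k * D (s *\<^sub>R x) \<partial>lborel) * (mi_pow x \<alpha> * f x) \<partial>lborel)
      = (\<integral>s. (\<integral>x. g1 s x \<partial>lborel) \<partial>lborel)"
    using lborel_pair.Fubini_integral[OF g1_int] by (simp add: slice)
  also have "\<dots> = (\<integral>s. (\<integral>y. g2 s y \<partial>lborel) \<partial>lborel)"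
  proof (rule integral_cong_AE)
    show "AE s in lborel. (\<integral>x. g1 s x \<partial>lborel) = (\<integral>y. g2 s y \<partial>lborel)"
      using AE_lborel_singleton[of 0]
      by eventually_elim (simp add: g1_def g2_def remainder_slice_dilation[OF a])
  qed measurable
  also have "\<dots> = (\<integral>y. remainder_profile f k \<alpha> y * D y \<partial>lborel)"
    using lborel_pair.Fubini_integral[OF g2_int] by (simp add: g2_def remainder_profile_def)
  finally show "(\<integral>x. (\<integral>s. indicator {0..1} s * (1 - s) ^ k * D (s *\<^sub>R x) \<partial>lborel) * (mi_pow x \<alpha> * f x) \<partial>lborel)
         = (\<integral>y. remainder_profile f k \<alpha> y * D y \<partial>lborel)" .
qed

end

section \<open>The moment expansion\<close>

lemma schwartz_pairing_expansion:
  fixes f :: "real^('n::{finite,linorder}) \<Rightarrow> real"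
  assumes f_weighted: "integrable lborel (\<lambda>x. f x * (1 + norm x ^ (k + 1)))" and S: "schwartz \<phi>"
  shows "regular_distr f \<phi> =
           (\<Sum>\<alpha>\<in>{\<alpha>. mi_abs \<alpha> \<le> k}. Dmi \<alpha> \<phi> 0 / mi_fact \<alpha> * (\<integral>x. mi_pow x \<alpha> * f x \<partial>lborel))
         + (\<Sum>\<alpha>\<in>{\<alpha>. mi_abs \<alpha> = k + 1}.
              (real k + 1) / mi_fact \<alpha> * (\<integral>y. remainder_profile f k \<alpha> y * Dmi \<alpha> \<phi> y \<partial>lborel))"
proof -
  let ?R = "\<lambda>\<alpha> x. ray_average \<phi> k \<alpha> x * (mi_pow x \<alpha> * f x)"
  have remainder: "integrable lborel (?R \<alpha>)
      \<and> (\<integral>x. ?R \<alpha> x \<partial>lborel) = (\<integral>y. remainder_profile f k \<alpha> y * Dmi \<alpha> \<phi> y \<partial>lborel)"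
    if "mi_abs \<alpha> = k + 1" for \<alpha>
  proof -
    obtain B where "\<And>y. \<bar>Dmi \<alpha> \<phi> y\<bar> \<le> B" using schwartz_Dmi_bounded[OF S] by blast
    note pairing = remainder_pairing[OF f_weighted that
        borel_measurable_continuous_onI[OF schwartz_Dmi_continuous[OF S]] this]
    show ?thesis unfolding ray_average_def using pairing by simp
  qed
  have moments: "integrable lborel (\<lambda>x. mi_pow x \<alpha> * f x)" if "mi_abs \<alpha> \<le> k" for \<alpha>
    using moment_integrable[OF f_weighted] that by simp
  have "f x * \<phi> x = (\<Sum>\<alpha>\<in>{\<alpha>. mi_abs \<alpha> \<le> k}. Dmi \<alpha> \<phi> 0 / mi_fact \<alpha> * (mi_pow x \<alpha> * f x))
      + (\<Sum>\<alpha>\<in>{\<alpha>. mi_abs \<alpha> = k + 1}. (real k + 1) / mi_fact \<alpha> * ?R \<alpha> x)" for x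
    by (subst taylor_formula[OF S, of x k]) (simp add: ring_distribs sum_distrib_left mult_ac)
  then have "regular_distr f \<phi> = (\<integral>x. (\<Sum>\<alpha>\<in>{\<alpha>. mi_abs \<alpha> \<le> k}. Dmi \<alpha> \<phi> 0 / mi_fact \<alpha> * (mi_pow x \<alpha> * f x))
      + (\<Sum>\<alpha>\<in>{\<alpha>. mi_abs \<alpha> = k + 1}. (real k + 1) / mi_fact \<alpha> * ?R \<alpha> x) \<partial>lborel)"
    by (simp add: regular_distr_def)
  also have "\<dots> = (\<integral>x. (\<Sum>\<alpha>\<in>{\<alpha>. mi_abs \<alpha> \<le> k}. Dmi \<alpha> \<phi> 0 / mi_fact \<alpha> * (mi_pow x \<alpha> * f x)) \<partial>lborel)
      + (\<integral>x. (\<Sum>\<alpha>\<in>{\<alpha>. mi_abs \<alpha> = k + 1}. (real k + 1) / mi_fact \<alpha> * ?R \<alpha> x) \<partial>lborel)"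
    using moments remainder
    by (intro Bochner_Integration.integral_add Bochner_Integration.integrable_sum integrable_mult_right) auto
  also have "\<dots> = (\<Sum>\<alpha>\<in>{\<alpha>. mi_abs \<alpha> \<le> k}. Dmi \<alpha> \<phi> 0 / mi_fact \<alpha> * (\<integral>x. mi_pow x \<alpha> * f x \<partial>lborel))
      + (\<Sum>\<alpha>\<in>{\<alpha>. mi_abs \<alpha> = k + 1}. (real k + 1) / mi_fact \<alpha> * (\<integral>x. ?R \<alpha> x \<partial>lborel))"
    using moments remainder
    by (subst (1 2) Bochner_Integration.integral_sum) (auto intro!: integrable_mult_right)
  also have "\<dots> = (\<Sum>\<alpha>\<in>{\<alpha>. mi_abs \<alpha> \<le> k}. Dmi \<alpha> \<phi> 0 / mi_fact \<alpha> * (\<integral>x. mi_pow x \<alpha> * f x \<partial>lborel))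
      + (\<Sum>\<alpha>\<in>{\<alpha>. mi_abs \<alpha> = k + 1}.
           (real k + 1) / mi_fact \<alpha> * (\<integral>y. remainder_profile f k \<alpha> y * Dmi \<alpha> \<phi> y \<partial>lborel))"
    using remainder by (intro arg_cong2[where f="(+)"] sum.cong refl) auto
  finally show ?thesis .
qed

lemma distr_D_dirac_term:
  "((-1) ^ mi_abs \<alpha> / mi_fact \<alpha>) * M * distr_D \<alpha> dirac \<phi> = Dmi \<alpha> \<phi> 0 / mi_fact \<alpha> * M"
  by (simp add: distr_D_def dirac_def flip: power_mult_distrib)

lemma distr_D_regular_term:
  "distr_D \<alpha> (regular_distr (\<lambda>y. (-1) ^ mi_abs \<alpha> * c * H y)) \<phi> = c * (\<integral>y. H y * Dmi \<alpha> \<phi> y \<partial>lborel)"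
proof -
  have "distr_D \<alpha> (regular_distr (\<lambda>y. (-1) ^ mi_abs \<alpha> * c * H y)) \<phi>
      = ((-1) ^ mi_abs \<alpha> * (-1) ^ mi_abs \<alpha> * c) * (\<integral>y. H y * Dmi \<alpha> \<phi> y \<partial>lborel)"
    by (simp add: distr_D_def regular_distr_def mult.assoc flip: integral_mult_right_zero)
  then show ?thesis by (simp flip: power_mult_distrib)
qed

theorem mainTheorem1:
  fixes f :: "real^('n::{finite,linorder}) \<Rightarrow> real" and k :: nat
  assumes "integrable lborel (\<lambda>x. f x * (1 + norm x ^ (k + 1)))"
  shows "\<exists>F :: ('n::{finite,linorder} \<Rightarrow> nat) \<Rightarrow> real^('n::{finite,linorder}) \<Rightarrow> real.
     (\<forall>\<alpha>. mi_abs \<alpha> = k + 1 \<longrightarrow> integrable lborel (F \<alpha>)) \<and>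
     (\<forall>\<phi>. schwartz \<phi> \<longrightarrow>
        regular_distr f \<phi> =
          (\<Sum>\<alpha>\<in>{\<alpha>. mi_abs \<alpha> \<le> k}.
             ((-1) ^ mi_abs \<alpha> / mi_fact \<alpha>) * integral\<^sup>L lborel (\<lambda>x. mi_pow x \<alpha> * f x)
             * distr_D \<alpha> dirac \<phi>)
          + (\<Sum>\<alpha>\<in>{\<alpha>. mi_abs \<alpha> = k + 1}. distr_D \<alpha> (regular_distr (F \<alpha>)) \<phi>)) \<and>
     (\<forall>\<alpha>. mi_abs \<alpha> = k + 1 \<longrightarrow>
        integral\<^sup>L lborel (\<lambda>x. \<bar>F \<alpha> x\<bar>)
          \<le> integral\<^sup>L lborel (\<lambda>x. \<bar>mi_pow x \<alpha> * f x\<bar>) / mi_fact \<alpha>)"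
proof -
  define F where "F \<alpha> y = (-1) ^ mi_abs \<alpha> * ((real k + 1) / mi_fact \<alpha>) * remainder_profile f k \<alpha> y"
    for \<alpha> y
  show ?thesis
  proof (intro exI[of _ F] conjI allI impI)
    fix \<alpha> :: "'n \<Rightarrow> nat" assume "mi_abs \<alpha> = k + 1"
    then show "integrable lborel (F \<alpha>)"
      unfolding F_def[abs_def] by (intro integrable_mult_right remainder_profile_integrable[OF assms])
  next
    fix \<phi> :: "real^('n::{finite,linorder}) \<Rightarrow> real" assume "schwartz \<phi>"
    then show "regular_distr f \<phi> =
        (\<Sum>\<alpha>\<in>{\<alpha>. mi_abs \<alpha> \<le> k}. ((-1) ^ mi_abs \<alpha> / mi_fact \<alpha>) * integral\<^sup>L lborel (\<lambda>x. mi_pow x \<alpha> * f x)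
            * distr_D \<alpha> dirac \<phi>)
        + (\<Sum>\<alpha>\<in>{\<alpha>. mi_abs \<alpha> = k + 1}. distr_D \<alpha> (regular_distr (F \<alpha>)) \<phi>)"
      unfolding F_def distr_D_dirac_term distr_D_regular_term
      by (rule schwartz_pairing_expansion[OF assms])
  next
    fix \<alpha> :: "'n \<Rightarrow> nat" assume "mi_abs \<alpha> = k + 1"
    then show "(\<integral>x. \<bar>F \<alpha> x\<bar> \<partial>lborel) \<le> (\<integral>x. \<bar>mi_pow x \<alpha> * f x\<bar> \<partial>lborel) / mi_fact \<alpha>"
      unfolding F_def by (rule normalised_profile_L1_bound[OF assms])
  qed
qed

end
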